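(* Let $\mathcal{X},\mathcal{Y}$ be finite alphabets, $P_X$ a fully supported PMF on $\mathcal{X}$ and $P_{Y|X}$ a transition kernel from $\mathcal{X}$ to $\mathcal{Y}$; write $P_{XY}=P_X\otimes P_{Y|X}$. Let $K\geq 2$, let $X_1,\ldots,X_K$ be IID with law $P_X$, let $\pi\in S_K$ be a cycle of length $K$, and set $\tilde X_j=X_{\pi(j)}$ for $j\in[K]$. Then $$\mathbb{E}\Big[\exp\Big(-\sum_{j=1}^K d_{P_{Y|X}}(X_j,\tilde X_j)\Big)\Big]\leq e^{-K\psi_2(P_{XY})},$$ where $\psi_2(P_{XY})=\min_{Q_{X_1X_2}\in\mathcal{P}(\mathcal{X}^2)}\big\{\tfrac12 D_{\mathrm{KL}}(Q_{X_1X_2}\|P_X^{\otimes2})+d_{P_{Y|X}}(Q_{X_1X_2})\big\}$.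
   Context: For $x_1,x_2\in\mathcal{X}$, $d_{P_{Y|X}}(x_1,x_2)=-\log\sum_{y\in\mathcal{Y}}\sqrt{P_{Y|X}(y|x_1)P_{Y|X}(y|x_2)}$ (Bhattacharyya distance), and for a joint PMF $Q_{X_1X_2}$ on $\mathcal{X}^2$, $d_{P_{Y|X}}(Q_{X_1X_2})=\sum_{x_1,x_2}Q_{X_1X_2}(x_1,x_2)d_{P_{Y|X}}(x_1,x_2)$. $\mathcal{P}(\mathcal{X}^2)$ denotes the probability simplex on $\mathcal{X}^2$. *)

theory Defs
  imports "HOL-Probability.Probability"
begin

definition bhatt_coeff :: "('x \<Rightarrow> 'y::finite pmf) \<Rightarrow> 'x \<Rightarrow> 'x \<Rightarrow> real" where
  "bhatt_coeff W x1 x2 = (\<Sum>y\<in>UNIV. sqrt (pmf (W x1) y * pmf (W x2) y))"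

definition bhatt_dist :: "('x \<Rightarrow> 'y::finite pmf) \<Rightarrow> 'x \<Rightarrow> 'x \<Rightarrow> ereal" where
  "bhatt_dist W x1 x2 =
     (if bhatt_coeff W x1 x2 = 0 then \<infinity> else ereal (- ln (bhatt_coeff W x1 x2)))"

text \<open>d(Q) = sum of Q(x1,x2) d(x1,x2) (with 0 * infinity = 0).\<close>
definition bhatt_dist_joint :: "('x::finite \<Rightarrow> 'y::finite pmf) \<Rightarrow> ('x \<times> 'x) pmf \<Rightarrow> ereal" where
  "bhatt_dist_joint W Q = (\<Sum>z\<in>UNIV. ereal (pmf Q z) * bhatt_dist W (fst z) (snd z))"

definition kl_div :: "'a::finite pmf \<Rightarrow> 'a pmf \<Rightarrow> ereal" where
  "kl_div Q R = (\<Sum>z\<in>UNIV.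
      if pmf Q z = 0 then 0
      else if pmf R z = 0 then \<infinity>
      else ereal (pmf Q z * ln (pmf Q z / pmf R z)))"

definition psi2 :: "'x::finite pmf \<Rightarrow> ('x \<Rightarrow> 'y::finite pmf) \<Rightarrow> ereal" where
  "psi2 PX W = (INF Q\<in>(UNIV :: ('x \<times> 'x) pmf set).
       ereal (1/2) * kl_div Q (pair_pmf PX PX) + bhatt_dist_joint W Q)"

fun ereal_exp :: "ereal \<Rightarrow> ereal" where
  "ereal_exp (ereal r) = ereal (exp r)"
| "ereal_exp PInfty = PInfty"
| "ereal_exp MInfty = 0"

definition is_full_cycle :: "nat \<Rightarrow> (nat \<Rightarrow> nat) \<Rightarrow> bool" where
  "is_full_cycle K \<pi> \<longleftrightarrow> \<pi> permutes {1..K} \<and>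
     (\<forall>i\<in>{1..K}. \<forall>j\<in>{1..K}. \<exists>n. (\<pi> ^^ n) i = j)"

end

theory Submission
  imports Defs "HOL-Combinatorics.Orbits"
begin

text \<open>Put A(a,b) = sqrt(P a) BC(a,b) sqrt(P b), where BC is the Bhattacharyya coefficient.
  Since exp(-d) = BC and the product of the P(X j) can be split symmetrically along \<pi>, the
  expectation equals the sum over X of the product of A(X j, X (\<pi> j)). Following the single
  cycle of \<pi>, this is a sum over closed walks of length K, i.e. the trace of A^K. By
  Cauchy-Schwarz the Frobenius norm is submultiplicative and tr(A^K) \<le> |A|_F^K for K \<ge> 2.
  Finally, the tilted law Q(a,b) = A(a,b)^2 / |A|_F^2 has 1/2 D(Q || P x P) + d(Q) = - ln |A|_F,
  hence \<psi>_2 \<le> - ln |A|_F and |A|_F^K \<le> exp(- K \<psi>_2).\<close>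

definition kernel_mult :: "('a::finite \<Rightarrow> 'a \<Rightarrow> real) \<Rightarrow> ('a \<Rightarrow> 'a \<Rightarrow> real) \<Rightarrow> 'a \<Rightarrow> 'a \<Rightarrow> real" where
  "kernel_mult A B a b = (\<Sum>c\<in>UNIV. A a c * B c b)"

definition frobenius_sq :: "('a::finite \<Rightarrow> 'a \<Rightarrow> real) \<Rightarrow> real" where
  "frobenius_sq A = (\<Sum>a\<in>UNIV. \<Sum>b\<in>UNIV. (A a b)\<^sup>2)"

lemma frobenius_sq_nonneg: "frobenius_sq A \<ge> 0"
  unfolding frobenius_sq_def by (intro sum_nonneg zero_le_power2)

lemma frobenius_sq_kernel_mult_le:
  "frobenius_sq (kernel_mult A B) \<le> frobenius_sq A * frobenius_sq B"
proof -
  have "frobenius_sq (kernel_mult A B)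
      \<le> (\<Sum>a\<in>UNIV. \<Sum>b\<in>UNIV. (\<Sum>c\<in>UNIV. (A a c)\<^sup>2) * (\<Sum>c\<in>UNIV. (B c b)\<^sup>2))"
    unfolding frobenius_sq_def kernel_mult_def by (intro sum_mono Cauchy_Schwarz_ineq_sum)
  also have "\<dots> = frobenius_sq A * (\<Sum>b\<in>UNIV. \<Sum>c\<in>UNIV. (B c b)\<^sup>2)"
    by (simp add: frobenius_sq_def sum_product)
  also have "\<dots> = frobenius_sq A * frobenius_sq B"
    unfolding frobenius_sq_def by (subst sum.swap) (rule refl)
  finally show ?thesis .
qed

lemma trace_kernel_mult_le:
  "(\<Sum>a\<in>UNIV. kernel_mult A B a a) \<le> sqrt (frobenius_sq A * frobenius_sq B)"
proof -
  have pair_sum: "(\<Sum>a\<in>UNIV. \<Sum>c\<in>UNIV. f a c) = (\<Sum>(a, c)\<in>UNIV. f a c)"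
    for f :: "'a \<Rightarrow> 'a \<Rightarrow> real"
    by (simp add: sum.cartesian_product)
  have "(\<Sum>a\<in>UNIV. kernel_mult A B a a) = (\<Sum>(a, c)\<in>UNIV. A a c * B c a)"
    by (simp add: kernel_mult_def pair_sum)
  also have "\<dots> \<le> sqrt ((\<Sum>(a, c)\<in>UNIV. (A a c)\<^sup>2) * (\<Sum>(a, c)\<in>UNIV. (B c a)\<^sup>2))"
    by (rule real_le_rsqrt) (use Cauchy_Schwarz_ineq_sum in \<open>simp add: case_prod_beta\<close>)
  also have "(\<Sum>(a, c)\<in>UNIV. (B c a)\<^sup>2) = frobenius_sq B"
    unfolding frobenius_sq_def pair_sum[symmetric] by (rule sum.swap)
  finally show ?thesis
    by (simp add: frobenius_sq_def pair_sum)
qed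

fun walk_weight :: "('a \<Rightarrow> 'a \<Rightarrow> real) \<Rightarrow> 'a \<Rightarrow> 'a list \<Rightarrow> 'a \<Rightarrow> real" where
  "walk_weight A a [] b = A a b"
| "walk_weight A a (c # cs) b = A a c * walk_weight A c cs b"

definition walk_sum :: "('a::finite \<Rightarrow> 'a \<Rightarrow> real) \<Rightarrow> nat \<Rightarrow> 'a \<Rightarrow> 'a \<Rightarrow> real" where
  "walk_sum A m a b = (\<Sum>cs | length cs = m. walk_weight A a cs b)"

lemma sum_lists_length_Suc:
  "(\<Sum>xs | length xs = Suc n. f xs) = (\<Sum>x\<in>UNIV. \<Sum>xs | length xs = n. f (x # xs :: 'a::finite list))"
proof -
  have "{xs::'a list. length xs = Suc n} = (\<lambda>(x, xs). x # xs) ` (UNIV \<times> {xs. length xs = n})"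
    by (auto simp: length_Suc_conv)
  moreover have "inj_on (\<lambda>(x, xs). x # xs) (UNIV \<times> {xs::'a list. length xs = n})"
    by (auto simp: inj_on_def)
  ultimately show ?thesis
    by (simp add: sum.reindex finite_list_length sum.cartesian_product prod.case_distrib)
qed

lemma walk_sum_0: "walk_sum A 0 = A"
  by (simp add: walk_sum_def fun_eq_iff)

lemma walk_sum_Suc: "walk_sum A (Suc m) = kernel_mult A (walk_sum A m)"
  by (simp add: fun_eq_iff walk_sum_def kernel_mult_def sum_lists_length_Suc sum_distrib_left)

lemma frobenius_sq_walk_sum_le: "frobenius_sq (walk_sum A m) \<le> frobenius_sq A ^ Suc m"
proof (induction m)
  case 0
  show ?case by (simp add: walk_sum_0)
next
  case (Suc m)
  have "frobenius_sq (walk_sum A (Suc m)) \<le> frobenius_sq A * frobenius_sq (walk_sum A m)"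
    unfolding walk_sum_Suc by (rule frobenius_sq_kernel_mult_le)
  also have "\<dots> \<le> frobenius_sq A * frobenius_sq A ^ Suc m"
    by (intro mult_left_mono Suc.IH frobenius_sq_nonneg)
  finally show ?case by simp
qed

lemma trace_walk_sum_le:
  "(\<Sum>a\<in>UNIV. walk_sum A (Suc m) a a) \<le> sqrt (frobenius_sq A) ^ Suc (Suc m)"
proof -
  have "(\<Sum>a\<in>UNIV. walk_sum A (Suc m) a a) \<le> sqrt (frobenius_sq A * frobenius_sq (walk_sum A m))"
    unfolding walk_sum_Suc by (rule trace_kernel_mult_le)
  also have "\<dots> \<le> sqrt (frobenius_sq A * frobenius_sq A ^ Suc m)"
    by (intro real_sqrt_le_mono mult_left_mono frobenius_sq_walk_sum_le frobenius_sq_nonneg)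
  also have "\<dots> = sqrt (frobenius_sq A) ^ Suc (Suc m)"
    by (simp add: real_sqrt_mult real_sqrt_power)
  finally show ?thesis .
qed

lemma prod_eq_walk_weight:
  "(\<Prod>n<Suc k. A (Z n) (Z (Suc n))) = walk_weight A (Z 0) (map Z [1..<Suc k]) (Z (Suc k))"
proof (induction k arbitrary: Z)
  case 0
  show ?case by simp
next
  case (Suc k)
  have "map Z [1..<Suc (Suc k)] = Z 1 # map (\<lambda>n. Z (Suc n)) [1..<Suc k]"
    by (simp add: upt_conv_Cons map_Suc_upt[symmetric] del: upt_Suc)
  then show ?case
    using Suc.IH[of "\<lambda>n. Z (Suc n)"]
    by (simp add: prod.lessThan_Suc_shift del: prod.lessThan_Suc upt_Suc)
qed

lemma full_cycle_funpow_bij_betw: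
  fixes \<pi> :: "nat \<Rightarrow> nat"
  assumes "is_full_cycle K \<pi>" "K \<ge> 1"
  shows "bij_betw (\<lambda>n. (\<pi> ^^ n) 1) {..<K} {1..K}" and "(\<pi> ^^ K) 1 = 1"
proof -
  have perm: "\<pi> permutes {1..K}" and reach: "\<forall>i\<in>{1..K}. \<forall>j\<in>{1..K}. \<exists>n. (\<pi> ^^ n) i = j"
    using assms(1) unfolding is_full_cycle_def by auto
  have "permutation \<pi>"
    using perm by (rule permutes_imp_permutation[rotated]) simp
  then have self: "1 \<in> orbit \<pi> 1"
    by (rule permutation_self_in_orbit)
  have "1 \<in> {1..K}"
    using assms(2) by simp
  have "orbit \<pi> 1 = {(\<pi> ^^ n) 1 | n. True}"
    by (rule orbit_altdef_permutation[OF \<open>permutation \<pi>\<close>])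
  also have "\<dots> = {1..K}"
  proof (intro equalityI subsetI)
    fix x assume "x \<in> {(\<pi> ^^ n) 1 | n. True}"
    then show "x \<in> {1..K}"
      using permutes_in_funpow_image[OF perm \<open>1 \<in> {1..K}\<close>] by blast
  next
    fix x assume "x \<in> {1..K}"
    then show "x \<in> {(\<pi> ^^ n) 1 | n. True}"
      using reach \<open>1 \<in> {1..K}\<close> by (metis (mono_tags, lifting) mem_Collect_eq)
  qed
  finally have orbit: "orbit \<pi> 1 = {1..K}" .
  define d where "d = funpow_dist1 \<pi> 1 1"
  have "bij_betw (\<lambda>n. (\<pi> ^^ n) 1) {..<d} (orbit \<pi> 1)"
    using inj_on_funpow_dist1[OF self] orbit_conv_funpow_dist1[OF self]
    by (simp add: bij_betw_def d_def atLeast0LessThan)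
  then have bij: "bij_betw (\<lambda>n. (\<pi> ^^ n) 1) {..<d} {1..K}"
    unfolding orbit .
  then have "d = K"
    using bij_betw_same_card by fastforce
  then show "bij_betw (\<lambda>n. (\<pi> ^^ n) 1) {..<K} {1..K}" "(\<pi> ^^ K) 1 = 1"
    using bij funpow_dist1_prop[OF self] by (simp_all add: d_def)
qed

lemma bij_betw_PiE_dflt_lists:
  assumes bij: "bij_betw \<sigma> {..<n} J"
  shows "bij_betw (\<lambda>X. map (X \<circ> \<sigma>) [0..<n]) (PiE_dflt J d (\<lambda>_. UNIV)) {zs. length zs = n}"
proof (rule bij_betw_byWitness[where f' = "\<lambda>zs j. if j \<in> J then zs ! inv_into {..<n} \<sigma> j else d"])
  have inv_mem: "inv_into {..<n} \<sigma> j < n" and \<sigma>_inv: "\<sigma> (inv_into {..<n} \<sigma> j) = j" if "j \<in> J" for j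
    using that bij_betw_apply[OF bij_betw_inv_into[OF bij]] bij_betw_inv_into_right[OF bij] by auto
  have inv_\<sigma>: "inv_into {..<n} \<sigma> (\<sigma> i) = i" if "i < n" for i
    using that bij by (simp add: bij_betw_def)
  show "\<forall>X\<in>PiE_dflt J d (\<lambda>_. UNIV).
      (\<lambda>j. if j \<in> J then map (X \<circ> \<sigma>) [0..<n] ! inv_into {..<n} \<sigma> j else d) = X"
    using inv_mem \<sigma>_inv by (auto simp: PiE_dflt_def)
  show "\<forall>zs\<in>{zs. length zs = n}.
      map ((\<lambda>j. if j \<in> J then zs ! inv_into {..<n} \<sigma> j else d) \<circ> \<sigma>) [0..<n] = zs"
    using inv_\<sigma> bij_betw_apply[OF bij] by (auto intro!: nth_equalityI)
qed (auto simp: PiE_dflt_def)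

lemma sum_PiE_dflt_full_cycle_eq_trace:
  fixes A :: "'a::finite \<Rightarrow> 'a \<Rightarrow> real"
  assumes "is_full_cycle K \<pi>" "K \<ge> 1"
  shows "(\<Sum>X\<in>PiE_dflt {1..K} d (\<lambda>_. UNIV). \<Prod>j\<in>{1..K}. A (X j) (X (\<pi> j)))
       = (\<Sum>a\<in>UNIV. walk_sum A (K - 1) a a)"
proof -
  define \<sigma> where "\<sigma> n = (\<pi> ^^ n) 1" for n
  obtain m where K: "K = Suc m"
    using assms(2) by (cases K) auto
  have bij: "bij_betw \<sigma> {..<K} {1..K}" and \<sigma>_K: "\<sigma> K = \<sigma> 0"
    using full_cycle_funpow_bij_betw[OF assms] by (simp_all add: \<sigma>_def[abs_def])
  have \<pi>_\<sigma>: "\<pi> (\<sigma> n) = \<sigma> (Suc n)" for n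
    by (simp add: \<sigma>_def)
  define closed_walk where "closed_walk zs = walk_weight A (hd zs) (tl zs) (hd zs)" for zs
  have prod_eq: "(\<Prod>j\<in>{1..K}. A (X j) (X (\<pi> j))) = closed_walk (map (X \<circ> \<sigma>) [0..<K])" for X
  proof -
    have "(\<Prod>j\<in>{1..K}. A (X j) (X (\<pi> j))) = (\<Prod>n<Suc m. A (X (\<sigma> n)) (X (\<sigma> (Suc n))))"
      using prod.reindex_bij_betw[OF bij, of "\<lambda>j. A (X j) (X (\<pi> j))"] by (simp add: \<pi>_\<sigma> K)
    also have "\<dots> = walk_weight A (X (\<sigma> 0)) (map (X \<circ> \<sigma>) [1..<Suc m]) (X (\<sigma> 0))"
      using prod_eq_walk_weight[of A "X \<circ> \<sigma>" m] \<sigma>_K by (simp add: K)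
    also have "\<dots> = closed_walk (map (X \<circ> \<sigma>) [0..<K])"
      by (simp add: closed_walk_def K upt_conv_Cons del: upt_Suc)
    finally show ?thesis .
  qed
  have "(\<Sum>X\<in>PiE_dflt {1..K} d (\<lambda>_. UNIV). \<Prod>j\<in>{1..K}. A (X j) (X (\<pi> j)))
      = (\<Sum>zs | length zs = K. closed_walk zs)"
    unfolding prod_eq by (rule sum.reindex_bij_betw[OF bij_betw_PiE_dflt_lists[OF bij]])
  also have "\<dots> = (\<Sum>a\<in>UNIV. walk_sum A (K - 1) a a)"
    by (simp add: K sum_lists_length_Suc closed_walk_def walk_sum_def)
  finally show ?thesis .
qed

lemma bhatt_coeff_nonneg: "bhatt_coeff W a b \<ge> 0"
  unfolding bhatt_coeff_def by (intro sum_nonneg) simp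

lemma bhatt_coeff_self: "bhatt_coeff W a a = 1"
proof -
  have "bhatt_coeff W a a = (\<Sum>y\<in>UNIV. pmf (W a) y)"
    unfolding bhatt_coeff_def by (simp add: real_sqrt_mult_self)
  also have "\<dots> = 1"
    by (rule sum_pmf_eq_1) auto
  finally show ?thesis .
qed

lemma ereal_exp_infinity [simp]: "ereal_exp \<infinity> = \<infinity>" "ereal_exp (- \<infinity>) = 0"
  by (simp_all only: infinity_ereal_def uminus_ereal.simps ereal_exp.simps)

lemma ereal_exp_mono: "x \<le> y \<Longrightarrow> ereal_exp x \<le> ereal_exp y"
  by (cases x; cases y) simp_all

lemma real_of_ereal_exp_neg_sum_bhatt_dist:
  assumes "finite J"
  shows "real_of_ereal (ereal_exp (- (\<Sum>j\<in>J. bhatt_dist W (u j) (v j))))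
       = (\<Prod>j\<in>J. bhatt_coeff W (u j) (v j))"
proof (cases "\<exists>j\<in>J. bhatt_coeff W (u j) (v j) = 0")
  case True
  then have "(\<Sum>j\<in>J. bhatt_dist W (u j) (v j)) = \<infinity>"
    using assms by (auto simp: sum_Pinfty bhatt_dist_def)
  moreover have "(\<Prod>j\<in>J. bhatt_coeff W (u j) (v j)) = 0"
    using True assms by simp
  ultimately show ?thesis
    by simp
next
  case False
  then have "(\<Sum>j\<in>J. bhatt_dist W (u j) (v j)) = ereal (- (\<Sum>j\<in>J. ln (bhatt_coeff W (u j) (v j))))"
    by (simp add: bhatt_dist_def sum_negf)
  moreover have "bhatt_coeff W (u j) (v j) > 0" if "j \<in> J" for j
    using False that bhatt_coeff_nonneg[of W "u j" "v j"] by auto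
  then have "exp (\<Sum>j\<in>J. ln (bhatt_coeff W (u j) (v j))) = (\<Prod>j\<in>J. bhatt_coeff W (u j) (v j))"
    by (simp add: exp_sum[OF assms])
  ultimately show ?thesis
    by simp
qed

definition bhatt_kernel :: "'x pmf \<Rightarrow> ('x \<Rightarrow> 'y::finite pmf) \<Rightarrow> 'x \<Rightarrow> 'x \<Rightarrow> real" where
  "bhatt_kernel P W a b = sqrt (pmf P a) * bhatt_coeff W a b * sqrt (pmf P b)"

lemma prod_bhatt_kernel_permutes:
  assumes "\<pi> permutes J" "finite J"
  shows "(\<Prod>j\<in>J. bhatt_kernel P W (X j) (X (\<pi> j)))
       = (\<Prod>j\<in>J. pmf P (X j)) * (\<Prod>j\<in>J. bhatt_coeff W (X j) (X (\<pi> j)))"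
proof -
  have "(\<Prod>j\<in>J. sqrt (pmf P (X (\<pi> j)))) = (\<Prod>j\<in>J. sqrt (pmf P (X j)))"
    using prod.permute[OF assms(1), of "\<lambda>j. sqrt (pmf P (X j))"] by (simp add: comp_def)
  then have "(\<Prod>j\<in>J. bhatt_kernel P W (X j) (X (\<pi> j)))
      = (\<Prod>j\<in>J. sqrt (pmf P (X j)))\<^sup>2 * (\<Prod>j\<in>J. bhatt_coeff W (X j) (X (\<pi> j)))"
    by (simp add: bhatt_kernel_def prod.distrib power2_eq_square)
  then show ?thesis
    by (simp add: prod_power_distrib)
qed

lemma expectation_Pi_pmf_eq_sum:
  fixes P :: "'a::finite pmf"
  assumes "finite J"
  shows "measure_pmf.expectation (Pi_pmf J d (\<lambda>_. P)) f
       = (\<Sum>X\<in>PiE_dflt J d (\<lambda>_. UNIV). (\<Prod>j\<in>J. pmf P (X j)) * f X)"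
proof -
  have "finite (PiE_dflt J d (\<lambda>_. UNIV :: 'a set))"
    using assms by (intro finite_PiE_dflt) auto
  then have "measure_pmf.expectation (Pi_pmf J d (\<lambda>_. P)) f
      = (\<Sum>X\<in>PiE_dflt J d (\<lambda>_. UNIV). pmf (Pi_pmf J d (\<lambda>_. P)) X * f X)"
    using assms by (subst integral_measure_pmf[of "PiE_dflt J d (\<lambda>_. UNIV)"])
      (auto simp: set_Pi_pmf PiE_dflt_def)
  also have "\<dots> = (\<Sum>X\<in>PiE_dflt J d (\<lambda>_. UNIV). (\<Prod>j\<in>J. pmf P (X j)) * f X)"
    using assms by (intro sum.cong) (auto simp: pmf_Pi PiE_dflt_def)
  finally show ?thesis .
qed

lemma kl_div_eq_sum_full_support:
  assumes "set_pmf R = UNIV"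
  shows "kl_div Q R = ereal (\<Sum>z\<in>UNIV. pmf Q z * ln (pmf Q z / pmf R z))"
  unfolding kl_div_def sum_ereal[symmetric]
  using assms by (intro sum.cong) (auto simp: set_pmf_iff zero_ereal_def)

lemma bhatt_dist_joint_eq_sum:
  assumes "\<And>z. pmf Q z \<noteq> 0 \<Longrightarrow> bhatt_coeff W (fst z) (snd z) \<noteq> 0"
  shows "bhatt_dist_joint W Q = ereal (\<Sum>z\<in>UNIV. - pmf Q z * ln (bhatt_coeff W (fst z) (snd z)))"
  unfolding bhatt_dist_joint_def sum_ereal[symmetric]
  using assms by (intro sum.cong) (auto simp: bhatt_dist_def zero_ereal_def)

lemma frobenius_sq_bhatt_kernel_pos:
  fixes P :: "'x::finite pmf"
  assumes "set_pmf P = UNIV"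
  shows "frobenius_sq (bhatt_kernel P W) > 0"
proof -
  fix a :: 'x
  have "0 < (bhatt_kernel P W a a)\<^sup>2"
    using assms pmf_positive[of a P] by (simp add: bhatt_kernel_def bhatt_coeff_self)
  also have "\<dots> \<le> (\<Sum>b\<in>UNIV. (bhatt_kernel P W a b)\<^sup>2)"
    by (rule member_le_sum) auto
  also have "\<dots> \<le> frobenius_sq (bhatt_kernel P W)"
    unfolding frobenius_sq_def
    by (rule member_le_sum[where f = "\<lambda>a. \<Sum>b\<in>UNIV. (bhatt_kernel P W a b)\<^sup>2"]) (auto intro: sum_nonneg)
  finally show ?thesis .
qed

lemma psi2_le_neg_ln_frobenius_sq:
  fixes P :: "'x::finite pmf" and W :: "'x \<Rightarrow> 'y::finite pmf"
  assumes full: "set_pmf P = UNIV"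
  shows "psi2 P W \<le> ereal (- ln (frobenius_sq (bhatt_kernel P W)) / 2)"
proof -
  define F where "F = frobenius_sq (bhatt_kernel P W)"
  define q where "q z = (bhatt_kernel P W (fst z) (snd z))\<^sup>2 / F" for z :: "'x \<times> 'x"
  have F_pos: "F > 0"
    using frobenius_sq_bhatt_kernel_pos[OF full] by (simp add: F_def)
  have P_pos: "pmf P a > 0" for a
    using full by (simp add: pmf_positive)
  have q_eq: "q (a, b) = pmf P a * pmf P b * (bhatt_coeff W a b)\<^sup>2 / F" for a b
    by (simp add: q_def bhatt_kernel_def power_mult_distrib)
  have q_nonneg: "q z \<ge> 0" for z
    using F_pos by (simp add: q_def)
  have q_sum: "(\<Sum>z\<in>UNIV. q z) = 1"
    using F_pos by (simp add: q_def F_def frobenius_sq_def sum_divide_distrib[symmetric]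
        sum.cartesian_product case_prod_unfold)
  define Q where "Q = embed_pmf q"
  have pmf_Q: "pmf Q z = q z" for z
    unfolding Q_def using q_nonneg q_sum
    by (intro pmf_embed_pmf) (simp_all add: nn_integral_count_space_finite sum_ennreal)
  have pointwise:
    "q z * ln (q z / pmf (pair_pmf P P) z) / 2 - q z * ln (bhatt_coeff W (fst z) (snd z))
      = - ln F / 2 * q z" for z
  proof (cases "q z = 0")
    case False
    obtain a b where z: "z = (a, b)"
      by fastforce
    have B_pos: "bhatt_coeff W a b > 0"
      using False bhatt_coeff_nonneg[of W a b] by (auto simp: z q_eq)
    have "q z / pmf (pair_pmf P P) z = (bhatt_coeff W a b)\<^sup>2 / F"
      using P_pos[of a] P_pos[of b] by (simp add: z q_eq pmf_pair field_simps)
    then have log_ratio: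
      "ln (q z / pmf (pair_pmf P P) z) = 2 * ln (bhatt_coeff W (fst z) (snd z)) - ln F"
      using B_pos F_pos by (simp add: z ln_div ln_realpow)
    show ?thesis
      unfolding log_ratio by (simp add: field_simps)
  qed simp
  have "kl_div Q (pair_pmf P P) = ereal (\<Sum>z\<in>UNIV. q z * ln (q z / pmf (pair_pmf P P) z))"
    using full by (simp add: kl_div_eq_sum_full_support set_pair_pmf pmf_Q)
  moreover have "bhatt_coeff W (fst z) (snd z) \<noteq> 0" if "pmf Q z \<noteq> 0" for z
    using that by (cases z) (simp add: pmf_Q q_eq)
  then have "bhatt_dist_joint W Q = ereal (\<Sum>z\<in>UNIV. - q z * ln (bhatt_coeff W (fst z) (snd z)))"
    by (subst bhatt_dist_joint_eq_sum) (simp_all add: pmf_Q)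
  ultimately have "ereal (1/2) * kl_div Q (pair_pmf P P) + bhatt_dist_joint W Q
      = ereal (\<Sum>z\<in>UNIV. q z * ln (q z / pmf (pair_pmf P P) z) / 2
                            - q z * ln (bhatt_coeff W (fst z) (snd z)))"
    by (simp add: sum_divide_distrib sum_subtractf sum_negf)
  also have "\<dots> = ereal (- ln F / 2)"
    by (simp only: pointwise sum_distrib_left[symmetric] q_sum) simp
  finally show ?thesis
    unfolding psi2_def F_def[symmetric] by (intro INF_lower2[OF UNIV_I] eq_refl)
qed

theorem lemma2:
  fixes PX :: "'x::finite pmf" and W :: "'x \<Rightarrow> 'y::finite pmf"
    and K :: nat and \<pi> :: "nat \<Rightarrow> nat"
  assumes full_support: "set_pmf PX = UNIV"
    and K_ge: "K \<ge> 2"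
    and cyc: "is_full_cycle K \<pi>"
  shows "ereal (measure_pmf.expectation (Pi_pmf {1..K} undefined (\<lambda>_. PX))
            (\<lambda>X. real_of_ereal (ereal_exp (- (\<Sum>j\<in>{1..K}. bhatt_dist W (X j) (X (\<pi> j)))))))
         \<le> ereal_exp (- (ereal (real K) * psi2 PX W))"
proof -
  let ?M = "Pi_pmf {1..K} undefined (\<lambda>_. PX)"
  let ?f = "\<lambda>X. real_of_ereal (ereal_exp (- (\<Sum>j\<in>{1..K}. bhatt_dist W (X j) (X (\<pi> j)))))"
  define A where "A = bhatt_kernel PX W"
  define F where "F = frobenius_sq A"
  have perm: "\<pi> permutes {1..K}"
    using cyc by (simp add: is_full_cycle_def)
  have F_pos: "F > 0"
    using frobenius_sq_bhatt_kernel_pos[OF full_support] by (simp add: F_def A_def)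
  have "measure_pmf.expectation ?M ?f
      = (\<Sum>X\<in>PiE_dflt {1..K} undefined (\<lambda>_. UNIV). \<Prod>j\<in>{1..K}. A (X j) (X (\<pi> j)))"
    by (simp only: A_def expectation_Pi_pmf_eq_sum real_of_ereal_exp_neg_sum_bhatt_dist
        prod_bhatt_kernel_permutes[OF perm] finite_atLeastAtMost)
  also have "\<dots> = (\<Sum>a\<in>UNIV. walk_sum A (K - 1) a a)"
    using K_ge by (intro sum_PiE_dflt_full_cycle_eq_trace[OF cyc]) simp
  also have "\<dots> \<le> sqrt F ^ K"
    using trace_walk_sum_le[of A "K - 2"] K_ge by (simp add: F_def numeral_2_eq_2 Suc_diff_Suc)
  also have "\<dots> = exp (real K * (ln F / 2))"
    using F_pos by (simp add: exp_of_nat_mult ln_sqrt[symmetric])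
  finally have "ereal (measure_pmf.expectation ?M ?f) \<le> ereal_exp (- (ereal (real K) * ereal (- ln F / 2)))"
    by simp
  also have "\<dots> \<le> ereal_exp (- (ereal (real K) * psi2 PX W))"
    using psi2_le_neg_ln_frobenius_sq[OF full_support, of W]
    by (intro ereal_exp_mono ereal_minus_le_minus[THEN iffD2] ereal_mult_left_mono)
      (simp_all add: F_def A_def)
  finally show ?thesis .
qed

end
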